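(* Let $H\in\mathbb{R}^{n\times d}$, $\Sigma\in\mathbb{R}^{n\times n}$ symmetric positive definite, $y\in\mathbb{R}^n$, $J\ge2$, and let $v_i^{(j)}$ be generated by deterministic EKI $$v_{i+1}^{(j)}=v_i^{(j)}+\Gamma_iH^\top(H\Gamma_iH^\top+\Sigma)^{-1}(y-Hv_i^{(j)}),$$ with $\Gamma_i$ the empirical covariance of $v_i^{(1)},\dots,v_i^{(J)}$. If $w\in\mathbb{R}^n\setminus\{0\}$ and $\delta_i\in\mathbb{R}$ satisfy $H\Gamma_iH^\top w=\delta_i\Sigma w$, then $H\Gamma_{i+1}H^\top w=\delta_{i+1}\Sigma w$ with $\delta_{i+1}=\delta_i/(1+\delta_i)^2$. In particular the generalized eigenvectors of the pencil $(H\Gamma_iH^\top,\Sigma)$ are constant in $i$.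
   Context: Empirical covariance: $\Gamma_i=\frac1{J-1}\sum_{j=1}^J(v_i^{(j)}-\bar v_i)(v_i^{(j)}-\bar v_i)^\top$, $\bar v_i=\frac1J\sum_jv_i^{(j)}$. *)

theory Defs
  imports "HOL-Analysis.Analysis"
begin

definition outer :: "real^'m \<Rightarrow> real^'k \<Rightarrow> real^'k^'m" where
  "outer u v = (\<chi> i j. u $ i * v $ j)"

definition ens_mean :: "nat \<Rightarrow> (nat \<Rightarrow> real^'d) \<Rightarrow> real^'d" where
  "ens_mean J v = (1 / real J) *\<^sub>R (\<Sum>j=1..J. v j)"

definition emp_cov :: "nat \<Rightarrow> (nat \<Rightarrow> real^'d) \<Rightarrow> real^'d^'d" where
  "emp_cov J v = (1 / (real J - 1)) *\<^sub>R
     (\<Sum>j=1..J. outer (v j - ens_mean J v) (v j - ens_mean J v))"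

definition spd :: "real^'n^'n \<Rightarrow> bool" where
  "spd S \<longleftrightarrow> transpose S = S \<and> (\<forall>x. x \<noteq> 0 \<longrightarrow> x \<bullet> (S *v x) > 0)"

end

theory Submission imports Defs begin

text \<open>
The EKI step is affine in the particles, \<open>v \<mapsto> (I - K H) v + K y\<close> with the Kalman gain
\<open>K = \<Gamma> H\<^sup>T A\<inverse>\<close>, \<open>A = H \<Gamma> H\<^sup>T + \<Sigma>\<close>, so the new covariance is \<open>(I - K H) \<Gamma> (I - K H)\<^sup>T\<close>.
Since \<open>H (I - K H) = (A - H \<Gamma> H\<^sup>T) A\<inverse> H = \<Sigma> A\<inverse> H\<close>, the observed covariance \<open>C = H \<Gamma> H\<^sup>T\<close>
is mapped to \<open>\<Sigma> A\<inverse> C A\<inverse> \<Sigma>\<close>. If \<open>C w = \<delta> \<Sigma> w\<close> then \<open>A w = (1 + \<delta>) \<Sigma> w\<close>, i.e.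
\<open>A\<inverse> \<Sigma> w = w / (1 + \<delta>)\<close>, and applying the four factors to \<open>w\<close> one after the other yields
\<open>\<delta> / (1 + \<delta>)\<^sup>2 \<cdot> \<Sigma> w\<close>. Positivity of \<open>\<Gamma>\<close> and \<open>\<Sigma>\<close> is used only to make \<open>A\<close> invertible;
\<open>1 + \<delta> \<noteq> 0\<close> then follows from \<open>A w \<noteq> 0\<close>.
\<close>

lemma transpose_add: "transpose (A + B) = transpose A + (transpose B :: real^'n^'m)"
  by (simp add: transpose_def vec_eq_iff)

lemma matrix_diff_ldistrib: "(A :: real^'n^'m) ** (B - C) = A ** B - A ** C"
  by (simp add: matrix_matrix_mult_def vec_eq_iff right_diff_distrib sum_subtractf)

lemma matrix_add_rdistrib: "((A :: real^'n^'m) + B) ** C = A ** C + B ** C"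
  by (simp add: matrix_matrix_mult_def vec_eq_iff distrib_right sum.distrib)

lemma inner_matrix_vector_mult: "((M :: real^'n^'m) *v a) \<bullet> x = a \<bullet> (transpose M *v x)"
  by (metis dot_lmul_matrix inner_commute transpose_matrix_vector)

lemma sum_matrix_vector_mult: "sum f S *v x = (\<Sum>j\<in>S. f j *v x)"
  by (induction S rule: infinite_finite_induct) (auto simp: matrix_vector_mult_add_rdistrib)

lemma matrix_vector_mult_sum: "M *v sum f S = (\<Sum>j\<in>S. M *v f j)"
  by (induction S rule: infinite_finite_induct) (auto simp: matrix_vector_right_distrib)

lemma outer_self_mult_vec: "outer u u *v x = (u \<bullet> x) *\<^sub>R u"
  by (simp add: vec_eq_iff outer_def matrix_vector_mult_def inner_vec_def sum_distrib_left mult_ac)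

lemma matrix_inv_right:
  assumes "invertible (A :: real^'n^'n)"
  shows "A ** matrix_inv A = mat 1"
  using someI_ex[of "\<lambda>A'. A ** A' = mat 1 \<and> A' ** A = mat 1"] assms
  by (auto simp: invertible_def matrix_inv_def)

lemma matrix_inv_left:
  assumes "invertible (A :: real^'n^'n)"
  shows "matrix_inv A ** A = mat 1"
  using someI_ex[of "\<lambda>A'. A ** A' = mat 1 \<and> A' ** A = mat 1"] assms
  by (auto simp: invertible_def matrix_inv_def)

lemma transpose_matrix_inv_symmetric:
  assumes "invertible (A :: real^'n^'n)" "transpose A = A"
  shows "transpose (matrix_inv A) = matrix_inv A"
proof -
  have "transpose (matrix_inv A) ** A = mat 1"
    by (metis assms matrix_inv_right matrix_transpose_mul transpose_mat)
  then have "transpose (matrix_inv A) = transpose (matrix_inv A) ** (A ** matrix_inv A)"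
    by (simp add: matrix_inv_right[OF assms(1)])
  also have "\<dots> = matrix_inv A"
    by (simp add: matrix_mul_assoc \<open>transpose (matrix_inv A) ** A = mat 1\<close>)
  finally show ?thesis .
qed

lemma psd_congruence:
  fixes H :: "real^'d^'n"
  assumes "\<And>z. 0 \<le> z \<bullet> (G *v z)"
  shows "0 \<le> x \<bullet> ((H ** G ** transpose H) *v x)"
  using assms[of "transpose H *v x"]
  by (metis inner_commute inner_matrix_vector_mult matrix_vector_mul_assoc)

lemma invertible_psd_add_spd:
  assumes psd: "\<And>x. 0 \<le> x \<bullet> (P *v x)" and "spd S"
  shows "invertible (P + S)"
  unfolding invertible_left_inverse matrix_left_invertible_ker
proof (intro allI impI)
  fix x assume "(P + S) *v x = 0"
  then have "x \<bullet> ((P + S) *v x) = 0"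
    by simp
  then have "x \<bullet> (P *v x) + x \<bullet> (S *v x) = 0"
    by (simp add: matrix_vector_mult_add_rdistrib inner_add_right)
  then show "x = 0"
    using psd[of x] \<open>spd S\<close> by (force simp: spd_def)
qed

lemma emp_cov_mult_vec:
  "emp_cov J v *v x = (1 / (real J - 1)) *\<^sub>R
     (\<Sum>j=1..J. ((v j - ens_mean J v) \<bullet> x) *\<^sub>R (v j - ens_mean J v))"
  by (simp add: emp_cov_def scaleR_matrix_vector_assoc[symmetric] sum_matrix_vector_mult
      outer_self_mult_vec)

lemma transpose_emp_cov: "transpose (emp_cov J v) = emp_cov J v"
  by (simp add: vec_eq_iff transpose_def emp_cov_def outer_def sum_component mult.commute)

lemma emp_cov_psd:
  assumes "J \<ge> 1"
  shows "0 \<le> x \<bullet> (emp_cov J v *v x)"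
  using assms by (simp add: emp_cov_mult_vec inner_sum_right sum_nonneg inner_commute)

lemma ens_mean_affine:
  assumes "J > 0" "\<And>j. j \<in> {1..J} \<Longrightarrow> u j = M *v v j + b"
  shows "ens_mean J u = M *v ens_mean J v + b"
proof -
  have "(\<Sum>j=1..J. u j) = M *v (\<Sum>j=1..J. v j) + real J *\<^sub>R b"
    using assms(2) by (simp add: matrix_vector_mult_sum sum.distrib vec_eq_iff of_nat_index)
  then show ?thesis
    using assms(1) by (simp add: ens_mean_def scaleR_add_right matrix_vector_mult_scaleR)
qed

lemma emp_cov_affine:
  assumes "J > 0" "\<And>j. j \<in> {1..J} \<Longrightarrow> u j = M *v v j + b"
  shows "emp_cov J u = M ** emp_cov J v ** transpose M"
  unfolding matrix_eq
proof
  fix x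
  have "u j - ens_mean J u = M *v (v j - ens_mean J v)" if "j \<in> {1..J}" for j
    using ens_mean_affine[OF assms] assms(2)[OF that] by (simp add: matrix_vector_mult_diff_distrib)
  then show "emp_cov J u *v x = (M ** emp_cov J v ** transpose M) *v x"
    by (simp add: emp_cov_mult_vec inner_matrix_vector_mult matrix_vector_mult_sum
        matrix_vector_mult_scaleR flip: matrix_vector_mul_assoc)
qed

lemma kalman_observation_residual:
  fixes H :: "real^'d^'n" and Sigma :: "real^'n^'n"
  assumes "invertible (H ** G ** transpose H + Sigma)"
  defines "Ai \<equiv> matrix_inv (H ** G ** transpose H + Sigma)"
  shows "H ** (mat 1 - G ** transpose H ** Ai ** H) = Sigma ** Ai ** H"
proof -
  have "H ** G ** transpose H ** Ai ** H + Sigma ** Ai ** H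
      = (H ** G ** transpose H + Sigma) ** Ai ** H"
    by (simp add: matrix_add_rdistrib)
  also have "\<dots> = H"
    by (simp add: Ai_def matrix_inv_right[OF assms(1)])
  finally show ?thesis
    by (metis add_diff_cancel_left' matrix_diff_ldistrib matrix_mul_assoc matrix_mul_rid)
qed

lemma observed_cov_kalman_update:
  fixes H :: "real^'d^'n" and Sigma :: "real^'n^'n"
  assumes "invertible (H ** G ** transpose H + Sigma)"
    and "transpose G = G" "transpose Sigma = Sigma"
  defines "Ai \<equiv> matrix_inv (H ** G ** transpose H + Sigma)"
  defines "M \<equiv> mat 1 - G ** transpose H ** Ai ** H"
  shows "H ** (M ** G ** transpose M) ** transpose H
    = Sigma ** Ai ** (H ** G ** transpose H) ** Ai ** Sigma"
proof -
  have "transpose Ai = Ai"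
    unfolding Ai_def using assms(1)
    by (rule transpose_matrix_inv_symmetric)
      (simp add: transpose_add matrix_transpose_mul assms(2,3) matrix_mul_assoc)
  have "H ** (M ** G ** transpose M) ** transpose H = (H ** M) ** G ** transpose (H ** M)"
    by (simp add: matrix_transpose_mul matrix_mul_assoc)
  also have "\<dots> = Sigma ** Ai ** (H ** G ** transpose H) ** Ai ** Sigma"
    unfolding M_def kalman_observation_residual[OF assms(1), folded Ai_def]
    using \<open>transpose Ai = Ai\<close> by (simp add: matrix_transpose_mul matrix_mul_assoc assms(3))
  finally show ?thesis .
qed

lemma kalman_update_generalized_eigvec:
  fixes C Sigma :: "real^'n^'n"
  assumes "invertible (C + Sigma)" and "w \<noteq> 0" and Cw: "C *v w = \<delta> *\<^sub>R (Sigma *v w)"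
  defines "Ai \<equiv> matrix_inv (C + Sigma)"
  shows "(Sigma ** Ai ** C ** Ai ** Sigma) *v w = (\<delta> / (1 + \<delta>)^2) *\<^sub>R (Sigma *v w)"
proof -
  have Aw: "(C + Sigma) *v w = (1 + \<delta>) *\<^sub>R (Sigma *v w)"
    by (simp add: matrix_vector_mult_add_rdistrib Cw algebra_simps)
  have w_eq: "w = (1 + \<delta>) *\<^sub>R (Ai *v (Sigma *v w))"
    by (metis Ai_def Aw assms(1) matrix_inv_left matrix_vector_mul_assoc matrix_vector_mul_lid
        matrix_vector_mult_scaleR)
  then have "1 + \<delta> \<noteq> 0"
    using \<open>w \<noteq> 0\<close> by auto
  then have AiSw: "Ai *v (Sigma *v w) = (1 / (1 + \<delta>)) *\<^sub>R w"
    using w_eq by (metis divide_inverse_commute divide_self_if scaleR_scaleR scaleR_one)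
  show ?thesis
    using \<open>1 + \<delta> \<noteq> 0\<close>
    by (simp add: AiSw Cw matrix_vector_mult_scaleR power2_eq_square flip: matrix_vector_mul_assoc)
qed

theorem proposition3p1:
  fixes H :: "real^'d^'n" and Sigma :: "real^'n^'n" and y :: "real^'n"
    and J :: nat and v :: "nat \<Rightarrow> nat \<Rightarrow> real^'d"
  assumes "spd Sigma"
    and "J \<ge> 2"
    and EKI: "\<And>i j. j \<in> {1..J} \<Longrightarrow>
      v (Suc i) j = v i j + (emp_cov J (v i) ** transpose H **
        matrix_inv (H ** emp_cov J (v i) ** transpose H + Sigma)) *v (y - H *v v i j)"
    and "w \<noteq> 0"
    and "(H ** emp_cov J (v i) ** transpose H) *v w = delta *\<^sub>R (Sigma *v w)"
  shows "(H ** emp_cov J (v (Suc i)) ** transpose H) *v w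
           = (delta / (1 + delta)^2) *\<^sub>R (Sigma *v w)"
proof -
  define G where "G = emp_cov J (v i)"
  define Ai where "Ai = matrix_inv (H ** G ** transpose H + Sigma)"
  define K where "K = G ** transpose H ** Ai"
  have G_sym: "transpose G = G"
    unfolding G_def by (rule transpose_emp_cov)
  have Sigma_sym: "transpose Sigma = Sigma"
    using \<open>spd Sigma\<close> by (simp add: spd_def)
  have "0 \<le> z \<bullet> (G *v z)" for z
    unfolding G_def using \<open>J \<ge> 2\<close> by (intro emp_cov_psd) simp
  then have inv: "invertible (H ** G ** transpose H + Sigma)"
    by (intro invertible_psd_add_spd psd_congruence \<open>spd Sigma\<close>)
  have "v (Suc i) j = (mat 1 - K ** H) *v v i j + K *v y" if "j \<in> {1..J}" for j
    using EKI[OF that]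
    by (simp add: K_def Ai_def G_def matrix_vector_mult_diff_rdistrib
        matrix_vector_mult_diff_distrib matrix_vector_mul_assoc)
  then have "emp_cov J (v (Suc i)) = (mat 1 - K ** H) ** G ** transpose (mat 1 - K ** H)"
    using \<open>J \<ge> 2\<close> unfolding G_def by (intro emp_cov_affine) auto
  then have "H ** emp_cov J (v (Suc i)) ** transpose H
      = Sigma ** Ai ** (H ** G ** transpose H) ** Ai ** Sigma"
    using observed_cov_kalman_update[OF inv G_sym Sigma_sym] by (simp add: K_def Ai_def)
  then show ?thesis
    using kalman_update_generalized_eigvec[OF inv \<open>w \<noteq> 0\<close>] assms(5)
    by (simp add: Ai_def G_def)
qed

end
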